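(* Let $R\in\mathbb{R}^{m\times N}$, $\lambda\ge 0$, and let $\sigma_1$ be the largest singular value of $R$, with corresponding left singular vector $u^1\in\mathbb{R}^m$ and right singular vector $v_1\in\mathbb{R}^{N}$ (unit vectors with $R v_1=\sigma_1 u^1$). Consider the problem $$\min_{d\in\mathbb{R}^m,\ \|d\|_2=1,\ x\in\mathbb{R}^{1\times N}}\ \frac12\|d\,x-R\|_F^2+\lambda\,\big\|\,\|x\|_2\,\big\|_0 ,$$ where $\|\,\|x\|_2\|_0$ equals $1$ if $x\neq 0$ and $0$ if $x=0$. If $\frac12\|\sigma_1 u^1 v_1^T-R\|_F^2\le\frac12\|R\|_F^2-\lambda$, then $(d,x)=(u^1,\sigma_1 v_1^T)$ is a minimizer. Otherwise, for any $d_0\in\mathbb{R}^m$ with $\|d_0\|_2=1$, the pair $(d_0,0)$ is a minimizer.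
   Context: This is the per-atom update of a K-SVD-type dictionary learning scheme with the row-sparsity ($\ell_{2,0}$) penalty counting nonzero rows of the representation matrix, where $R$ is the residual after removing the contribution of the current atom; in the paper $d_0$ is the current (previous) atom. *)

theory Defs
  imports "HOL-Analysis.Analysis"
begin

text \<open>Matrices in R^(m x N) are rendered as real^'N^'m (rows indexed by 'm).
  A row vector x in R^(1 x N) is rendered as real^'N.\<close>

definition frobenius_norm :: "real^'n^'m \<Rightarrow> real" where
  "frobenius_norm A = sqrt (\<Sum>i\<in>UNIV. \<Sum>j\<in>UNIV. (A $ i $ j)^2)"

definition outer_prod :: "real^'m \<Rightarrow> real^'n \<Rightarrow> real^'n^'m" where
  "outer_prod d x = (\<chi> i j. d $ i * x $ j)"

definition singular_triple :: "real^'n^'m \<Rightarrow> real \<Rightarrow> real^'m \<Rightarrow> real^'n \<Rightarrow> bool" where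
  "singular_triple R \<sigma> u v \<longleftrightarrow> \<sigma> \<ge> 0 \<and> norm u = 1 \<and> norm v = 1 \<and>
     R *v v = \<sigma> *\<^sub>R u \<and> transpose R *v u = \<sigma> *\<^sub>R v"

definition singular_value :: "real^'n^'m \<Rightarrow> real \<Rightarrow> bool" where
  "singular_value R \<sigma> \<longleftrightarrow> (\<exists>u v. singular_triple R \<sigma> u v)"

definition row_l0 :: "real^'n \<Rightarrow> real" where
  "row_l0 x = (if x = 0 then 0 else 1)"

definition atom_objective :: "real^'n^'m \<Rightarrow> real \<Rightarrow> real^'m \<Rightarrow> real^'n \<Rightarrow> real" where
  "atom_objective R lam d x = (1/2) * (frobenius_norm (outer_prod d x - R))^2 + lam * row_l0 x"

definition is_atom_minimizer :: "real^'n^'m \<Rightarrow> real \<Rightarrow> real^'m \<Rightarrow> real^'n \<Rightarrow> bool" where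
  "is_atom_minimizer R lam d x \<longleftrightarrow> norm d = 1 \<and>
     (\<forall>d' x'. norm d' = 1 \<longrightarrow> atom_objective R lam d x \<le> atom_objective R lam d' x')"

end

theory Submission
  imports Defs
begin

text \<open>For a unit vector d, completing the square gives
  \<open>\<parallel>d x - R\<parallel>\<^sub>F\<^sup>2 = \<parallel>x - R\<^sup>T d\<parallel>\<^sup>2 + \<parallel>R\<parallel>\<^sub>F\<^sup>2 - \<parallel>R\<^sup>T d\<parallel>\<^sup>2\<close>.
  A maximizer of \<open>\<parallel>R\<^sup>T d\<parallel>\<close> over the unit sphere is a left singular vector whose singular value
  is that maximum, so \<open>\<parallel>R\<^sup>T d\<parallel> \<le> \<sigma>\<^sub>1\<close>. Hence any pair with \<open>x \<noteq> 0\<close> costs at least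
  \<open>(\<parallel>R\<parallel>\<^sub>F\<^sup>2 - \<sigma>\<^sub>1\<^sup>2)/2 + \<lambda>\<close>, and \<open>(u\<^sup>1, \<sigma>\<^sub>1 v\<^sub>1)\<close> costs no more, while \<open>x = 0\<close> costs
  \<open>\<parallel>R\<parallel>\<^sub>F\<^sup>2/2\<close>; the minimizer is the cheaper of the two.\<close>

lemma inner_matrix_vector_transpose:
  fixes M :: "real^'n^'m"
  shows "(M *v x) \<bullet> y = x \<bullet> (transpose M *v y)"
  by (metis dot_lmul_matrix vector_transpose_matrix)

lemma frobenius_norm_eq_norm: "frobenius_norm A = norm A"
  unfolding frobenius_norm_def norm_vec_def L2_set_def
  by (simp add: sum_nonneg)

lemma inner_outer_prod: "outer_prod d x \<bullet> A = d \<bullet> (A *v x)"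
  unfolding outer_prod_def inner_vec_def matrix_vector_mult_def
  by (simp add: sum_distrib_left mult_ac)

lemma norm_outer_prod: "norm (outer_prod d x) = norm d * norm x"
proof -
  have "(norm (outer_prod d x))\<^sup>2 = (norm d * norm x)\<^sup>2"
    unfolding power2_norm_eq_inner power_mult_distrib inner_outer_prod
    unfolding outer_prod_def inner_vec_def matrix_vector_mult_def
    by (simp add: sum_distrib_left sum_distrib_right mult_ac)
  then show ?thesis by simp
qed

lemma frobenius_norm_outer_prod_diff:
  fixes R :: "real^'n^'m"
  assumes "norm d = 1"
  shows "(frobenius_norm (outer_prod d x - R))\<^sup>2
           = (norm (x - transpose R *v d))\<^sup>2 + (frobenius_norm R)\<^sup>2 - (norm (transpose R *v d))\<^sup>2"
proof -
  have "outer_prod d x \<bullet> R = x \<bullet> (transpose R *v d)"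
    by (metis inner_commute inner_outer_prod inner_matrix_vector_transpose)
  moreover have "outer_prod d x \<bullet> outer_prod d x = x \<bullet> x"
    using norm_outer_prod[of d x] assms by (simp flip: power2_norm_eq_inner)
  ultimately show ?thesis
    unfolding frobenius_norm_eq_norm power2_norm_eq_inner
    by (simp add: inner_diff_left inner_diff_right inner_commute)
qed

lemma norm_matrix_vector_attains_max:
  fixes A :: "real^'n^'m"
  obtains d where "norm d = 1" "\<And>w. norm (A *v w) \<le> norm (A *v d) * norm w"
proof -
  have "continuous_on (sphere 0 1) (\<lambda>w. norm (A *v w))"
    by (intro continuous_on_norm linear_continuous_on matrix_vector_mul_bounded_linear)
  moreover have "sphere (0::real^'n) 1 \<noteq> {}"
    by simp
  ultimately obtain d where d: "norm d = 1" "\<And>w. norm w = 1 \<Longrightarrow> norm (A *v w) \<le> norm (A *v d)"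
    using continuous_attains_sup[OF compact_sphere] by (metis mem_sphere_0)
  have "norm (A *v w) \<le> norm (A *v d) * norm w" for w
  proof (cases "w = 0")
    case False
    then have "norm (A *v (w /\<^sub>R norm w)) \<le> norm (A *v d)"
      by (intro d(2)) simp
    then show ?thesis
      using False by (simp add: matrix_vector_mult_scaleR field_simps)
  qed simp
  with d(1) show thesis by (rule that)
qed

lemma maximizing_direction_is_eigenvector:
  fixes A :: "real^'n^'m"
  assumes d: "norm d = 1" and max: "\<And>w. norm (A *v w) \<le> norm (A *v d) * norm w"
  shows "transpose A *v (A *v d) = (norm (A *v d))\<^sup>2 *\<^sub>R d"
proof -
  define s where "s = norm (A *v d)"
  define b where "b = transpose A *v (A *v d)"
  have "d \<bullet> d = 1"
    using d by (simp flip: power2_norm_eq_inner)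
  have bd: "b \<bullet> d = s\<^sup>2"
    by (metis b_def s_def inner_commute inner_matrix_vector_transpose power2_norm_eq_inner)
  have "(norm b)\<^sup>2 = (A *v d) \<bullet> (A *v b)"
    by (metis b_def power2_norm_eq_inner inner_matrix_vector_transpose transpose_transpose)
  also have "\<dots> \<le> s * norm (A *v b)"
    unfolding s_def by (rule norm_cauchy_schwarz)
  also have "\<dots> \<le> s * (s * norm b)"
    using max[of b] by (simp add: s_def mult_left_mono)
  finally have "norm b * norm b \<le> s\<^sup>2 * norm b"
    by (simp add: power2_eq_square mult.assoc)
  then have "norm b \<le> s\<^sup>2"
    by (cases "b = 0") (simp_all add: mult_le_cancel_right)
  then have "(norm b)\<^sup>2 \<le> (s\<^sup>2)\<^sup>2"
    by (rule power_mono) simp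
  \<comment> \<open>with \<open>b \<bullet> d = s\<^sup>2\<close> this is the equality case of Cauchy-Schwarz\<close>
  then have "(norm (b - s\<^sup>2 *\<^sub>R d))\<^sup>2 \<le> 0"
    using bd \<open>d \<bullet> d = 1\<close> unfolding power2_norm_eq_inner
    by (simp add: inner_diff_left inner_diff_right inner_commute power2_eq_square)
  then show ?thesis
    by (simp add: b_def s_def)
qed

lemma singular_value_maximizing_direction:
  fixes R :: "real^'n^'m"
  assumes d: "norm d = 1" and max: "\<And>w. norm (transpose R *v w) \<le> norm (transpose R *v d) * norm w"
  shows "singular_value R (norm (transpose R *v d))"
proof (cases "transpose R *v d = 0")
  case True
  \<comment> \<open>then \<open>R = 0\<close>, and any unit vector is a right singular vector for 0\<close>
  then have "transpose R *v w = 0" for w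
    using max[of w] by simp
  then have "(norm (R *v axis i 1))\<^sup>2 = 0" for i
    by (simp add: power2_norm_eq_inner inner_matrix_vector_transpose)
  then have "singular_triple R 0 d (axis i 1)" for i
    using d \<open>transpose R *v d = 0\<close> by (simp add: singular_triple_def)
  with True show ?thesis
    unfolding singular_value_def by auto
next
  case False
  define s where "s = norm (transpose R *v d)"
  have "s > 0"
    using False by (simp add: s_def)
  have "R *v (transpose R *v d) = s\<^sup>2 *\<^sub>R d"
    using maximizing_direction_is_eigenvector[of d "transpose R"] d max
    by (simp add: s_def)
  then have "singular_triple R s d (transpose R *v d /\<^sub>R s)"
    using d \<open>s > 0\<close>
    by (simp add: singular_triple_def matrix_vector_mult_scaleR s_def power2_eq_square)
  then show ?thesis
    unfolding singular_value_def s_def by blast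
qed

lemma norm_transpose_mult_le_largest_singular_value:
  fixes R :: "real^'n^'m"
  assumes largest: "\<forall>\<sigma>. singular_value R \<sigma> \<longrightarrow> \<sigma> \<le> \<sigma>\<^sub>1" and "norm d = 1"
  shows "norm (transpose R *v d) \<le> \<sigma>\<^sub>1"
proof -
  obtain d' where "norm d' = 1" and max: "\<And>w. norm (transpose R *v w) \<le> norm (transpose R *v d') * norm w"
    using norm_matrix_vector_attains_max[of "transpose R"] by blast
  have "norm (transpose R *v d) \<le> norm (transpose R *v d')"
    using max[of d] \<open>norm d = 1\<close> by simp
  also have "\<dots> \<le> \<sigma>\<^sub>1"
    using largest singular_value_maximizing_direction[OF \<open>norm d' = 1\<close> max] by blast
  finally show ?thesis .
qed

lemma outer_prod_zero_right [simp]: "outer_prod d 0 = 0"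
  by (simp add: outer_prod_def vec_eq_iff)

lemma scaleR_outer_prod_right: "c *\<^sub>R outer_prod d x = outer_prod d (c *\<^sub>R x)"
  by (simp add: outer_prod_def vec_eq_iff)

lemma atom_objective_zero: "atom_objective R lam d 0 = (frobenius_norm R)\<^sup>2 / 2"
  by (simp add: atom_objective_def row_l0_def frobenius_norm_eq_norm)

lemma atom_objective_lower_bound:
  fixes R :: "real^'n^'m"
  assumes "norm d = 1" and "norm (transpose R *v d) \<le> \<sigma>"
  shows "min ((frobenius_norm R)\<^sup>2 / 2) (((frobenius_norm R)\<^sup>2 - \<sigma>\<^sup>2) / 2 + lam)
           \<le> atom_objective R lam d x"
proof (cases "x = 0")
  case False
  have "(norm (transpose R *v d))\<^sup>2 \<le> \<sigma>\<^sup>2"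
    using assms(2) by (simp add: power_mono)
  then have "(frobenius_norm R)\<^sup>2 - \<sigma>\<^sup>2 \<le> (frobenius_norm (outer_prod d x - R))\<^sup>2"
    unfolding frobenius_norm_outer_prod_diff[OF assms(1)]
    using zero_le_power2[of "norm (x - transpose R *v d)"] by linarith
  with False show ?thesis
    by (simp add: atom_objective_def row_l0_def min_le_iff_disj)
qed (metis atom_objective_zero min.cobounded1)

lemma frobenius_norm_singular_residual:
  assumes "singular_triple R \<sigma> u v"
  shows "(frobenius_norm (\<sigma> *\<^sub>R outer_prod u v - R))\<^sup>2 = (frobenius_norm R)\<^sup>2 - \<sigma>\<^sup>2"
  using assms unfolding singular_triple_def scaleR_outer_prod_right
  by (simp add: frobenius_norm_outer_prod_diff)

lemma atom_objective_singular_pair_le: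
  assumes "lam \<ge> 0" and "singular_triple R \<sigma> u v"
  shows "atom_objective R lam u (\<sigma> *\<^sub>R v) \<le> ((frobenius_norm R)\<^sup>2 - \<sigma>\<^sup>2) / 2 + lam"
  using assms frobenius_norm_singular_residual[OF assms(2)]
  by (simp add: atom_objective_def row_l0_def scaleR_outer_prod_right)

theorem proposition3:
  fixes R :: "real^'N^'m" and lam \<sigma>\<^sub>1 :: real and u1 :: "real^'m" and v1 :: "real^'N"
  assumes "lam \<ge> 0"
    and "singular_triple R \<sigma>\<^sub>1 u1 v1"
    and "\<forall>\<sigma>. singular_value R \<sigma> \<longrightarrow> \<sigma> \<le> \<sigma>\<^sub>1"
  shows "((1/2) * (frobenius_norm (\<sigma>\<^sub>1 *\<^sub>R outer_prod u1 v1 - R))^2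
            \<le> (1/2) * (frobenius_norm R)^2 - lam
          \<longrightarrow> is_atom_minimizer R lam u1 (\<sigma>\<^sub>1 *\<^sub>R v1))
       \<and> (\<not> ((1/2) * (frobenius_norm (\<sigma>\<^sub>1 *\<^sub>R outer_prod u1 v1 - R))^2
            \<le> (1/2) * (frobenius_norm R)^2 - lam)
          \<longrightarrow> (\<forall>d0 :: real^'m. norm d0 = 1 \<longrightarrow> is_atom_minimizer R lam d0 0))"
proof -
  define F where "F = frobenius_norm R"
  have lower: "min (F\<^sup>2 / 2) ((F\<^sup>2 - \<sigma>\<^sub>1\<^sup>2) / 2 + lam) \<le> atom_objective R lam d x"
    if "norm d = 1" for d x
    unfolding F_def using that
    by (intro atom_objective_lower_bound norm_transpose_mult_le_largest_singular_value assms(3))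
  have "norm u1 = 1"
    using assms(2) by (simp add: singular_triple_def)
  have value_u1: "atom_objective R lam u1 (\<sigma>\<^sub>1 *\<^sub>R v1) \<le> (F\<^sup>2 - \<sigma>\<^sub>1\<^sup>2) / 2 + lam"
    unfolding F_def using assms(1,2) by (rule atom_objective_singular_pair_le)
  have value_zero: "atom_objective R lam d0 0 = F\<^sup>2 / 2" for d0 :: "real^'m"
    unfolding F_def by (rule atom_objective_zero)
  show ?thesis
    unfolding frobenius_norm_singular_residual[OF assms(2)] F_def[symmetric]
  proof (intro conjI impI allI)
    assume "1/2 * (F\<^sup>2 - \<sigma>\<^sub>1\<^sup>2) \<le> 1/2 * F\<^sup>2 - lam"
    then have "min (F\<^sup>2 / 2) ((F\<^sup>2 - \<sigma>\<^sub>1\<^sup>2) / 2 + lam) = (F\<^sup>2 - \<sigma>\<^sub>1\<^sup>2) / 2 + lam"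
      by (intro min_absorb2) linarith
    then show "is_atom_minimizer R lam u1 (\<sigma>\<^sub>1 *\<^sub>R v1)"
      unfolding is_atom_minimizer_def using \<open>norm u1 = 1\<close> value_u1 lower by (metis order.trans)
  next
    fix d0 :: "real^'m"
    assume "\<not> 1/2 * (F\<^sup>2 - \<sigma>\<^sub>1\<^sup>2) \<le> 1/2 * F\<^sup>2 - lam" and "norm d0 = 1"
    then have "min (F\<^sup>2 / 2) ((F\<^sup>2 - \<sigma>\<^sub>1\<^sup>2) / 2 + lam) = F\<^sup>2 / 2"
      by (intro min_absorb1) linarith
    then show "is_atom_minimizer R lam d0 0"
      unfolding is_atom_minimizer_def using \<open>norm d0 = 1\<close> value_zero lower by metis
  qed
qed

end
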